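(* Let $\mathcal{B}$ be a homothecy invariant collection of rectangular parallelepipeds in $\mathbb{R}^n$. Let $E\subset\mathbb{R}^n$ be a measurable set of finite measure and let $\alpha\in(0,1)$. Then for all $\xi,\delta\in(0,1)$ with $\alpha<1-\delta<\xi$ we have \[ \mathcal{H}_{\mathcal{B},\alpha}(E)\subseteq \mathcal{H}_{\mathcal{B},\,\alpha\left(1+\frac{1-\xi}{2^n}\right)}\big(\mathcal{H}_{\mathcal{B},1-\delta}(E)\big). \]
   Context: A basis $\mathcal B$ is a collection of bounded open sets in $\mathbb R^n$; it is homothecy invariant if every translate and every positive dilate of a member of $\mathcal B$ belongs to $\mathcal B$. For locally integrable $f$, $M_{\mathcal B}f(x)=\sup_{x\in R\in\mathcal B}\frac{1}{|R|}\int_R|f|$ if $x\in\bigcup_{B\in\mathcal B}B$ and $M_{\mathcal B}f(x)=0$ otherwise. For a measurable set $E$ and $\beta>0$, the halo set is $\mathcal H_{\mathcal B,\beta}(E)=\{x\in\mathbb R^n: M_{\mathcal B}\chi_E(x)>\beta\}$. Here a rectangular parallelepiped means a (open) box, and $|\cdot|$ is Lebesgue measure. *)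

theory Defs
  imports "HOL-Analysis.Analysis"
begin

definition is_open_box :: "'a::euclidean_space set \<Rightarrow> bool" where
  "is_open_box R \<longleftrightarrow> (\<exists>a b. (\<forall>i\<in>Basis. a \<bullet> i < b \<bullet> i) \<and> R = box a b)"

definition homothecy_invariant :: "'a::euclidean_space set set \<Rightarrow> bool" where
  "homothecy_invariant \<B> \<longleftrightarrow>
     (\<forall>R\<in>\<B>. \<forall>v. (\<lambda>x. v + x) ` R \<in> \<B>) \<and>
     (\<forall>R\<in>\<B>. \<forall>c::real. c > 0 \<longrightarrow> (\<lambda>x. c *\<^sub>R x) ` R \<in> \<B>)"

text \<open>Maximal operator (values in extended reals, so the supremum is always meaningful).\<close>
definition max_op :: "'a::euclidean_space set set \<Rightarrow> ('a \<Rightarrow> real) \<Rightarrow> 'a \<Rightarrow> ereal" where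
  "max_op \<B> f x =
     (if x \<in> \<Union>\<B>
      then (SUP R\<in>{R\<in>\<B>. x \<in> R}.
              ereal ((set_lebesgue_integral lebesgue R (\<lambda>y. \<bar>f y\<bar>)) / measure lebesgue R))
      else 0)"

definition halo :: "'a::euclidean_space set set \<Rightarrow> real \<Rightarrow> 'a set \<Rightarrow> 'a set" where
  "halo \<B> \<beta> E = {x. max_op \<B> (indicator E) x > ereal \<beta>}"

end

theory Submission
  imports Defs
begin

(* Let R = box a b be a member of the basis with |R \<inter> E| > \<alpha> |R|, and let H be the halo of E at
   level 1 - \<delta>. Call a homothet Q of R dense if E has density > 1 - \<delta> in Q, and sparse
   otherwise; by homothecy invariance every dense homothet lies in H. If R itself is dense,
   then R \<subseteq> H and we are done, because \<alpha> (1 + (1 - \<xi>) / 2^n) < \<xi> (2 - \<xi>) \<le> 1. Otherwise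
   R is sparse, and it suffices to show (1 + \<delta> / 2^n) |E \<inter> R| \<le> |H \<inter> R|.

   Points of E that lie in arbitrarily small sparse homothets form a null set, by a Vitali
   covering argument; all points of E outside H are of this kind. Split a sparse homothet Q
   into its 2^n dyadic children. If one child is dense, enlarge it from its corner until it
   becomes sparse: the resulting box lies in H, has measure at least |Q| / 2^n, and at least a
   \<delta>-fraction of it is outside E, so |(H - E) \<inter> Q| \<ge> \<delta> / 2^n |Q|. Otherwise recurse into
   the children. Down to depth k this gives \<delta> / 2^n (|E \<inter> Q| - |E \<inter> U_k|) \<le> |(H - E) \<inter> Q|,
   where U_k is the union of the sparse sub-homothets of Q of scale at most 2^-k; and
   |E \<inter> U_k| \<rightarrow> 0 because the points of E in every U_k are again of the above kind.
   Only E \<inter> R enters. *)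

section \<open>Halos of bases of open boxes\<close>

lemma measure_box_pos:
  fixes a b :: "'a::euclidean_space"
  assumes "\<forall>i\<in>Basis. a \<bullet> i < b \<bullet> i"
  shows "0 < measure lebesgue (box a b)"
  using assms by (simp add: measure_lborel_box_eq inner_diff_left prod_pos less_imp_le)

lemma set_integral_indicator:
  assumes "R \<in> lmeasurable" "A \<in> sets lebesgue"
  shows "set_lebesgue_integral lebesgue R (indicator A :: _ \<Rightarrow> real) = measure lebesgue (R \<inter> A)"
proof -
  have "(\<lambda>y. indicator R y *\<^sub>R indicator A y :: real) = indicator (R \<inter> A)"
    by (auto simp: indicator_def)
  then show ?thesis
    using assms by (simp add: set_lebesgue_integral_def fmeasurable_def)
qed

lemma mem_halo_iff:
  fixes E :: "'a::euclidean_space set"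
  assumes B: "\<forall>R\<in>\<B>. is_open_box R" and E: "E \<in> sets lebesgue" and "0 \<le> \<beta>"
  shows "x \<in> halo \<B> \<beta> E \<longleftrightarrow> (\<exists>R\<in>\<B>. x \<in> R \<and> \<beta> * measure lebesgue R < measure lebesgue (R \<inter> E))"
proof -
  have average: "ereal \<beta> < ereal (set_lebesgue_integral lebesgue R (\<lambda>y. \<bar>indicator E y\<bar>) / measure lebesgue R)
                 \<longleftrightarrow> \<beta> * measure lebesgue R < measure lebesgue (R \<inter> E)" if "R \<in> \<B>" for R
  proof -
    obtain a b where "\<forall>i\<in>Basis. a \<bullet> i < b \<bullet> i" "R = box a b"
      using B \<open>R \<in> \<B>\<close> unfolding is_open_box_def by blast
    then have "0 < measure lebesgue R" "R \<in> lmeasurable" using measure_box_pos by auto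
    then show ?thesis using E by (simp add: set_integral_indicator pos_less_divide_eq)
  qed
  show ?thesis
  proof (cases "x \<in> \<Union>\<B>")
    case True
    then show ?thesis unfolding halo_def max_op_def using average by (auto simp: less_SUP_iff)
  next
    case False
    then show ?thesis unfolding halo_def max_op_def using \<open>0 \<le> \<beta>\<close> by auto
  qed
qed

lemma open_halo:
  assumes "\<forall>R\<in>\<B>. is_open_box R" "E \<in> sets lebesgue" "0 \<le> \<beta>"
  shows "open (halo \<B> \<beta> E)"
proof -
  have "halo \<B> \<beta> E = \<Union>{R\<in>\<B>. \<beta> * measure lebesgue R < measure lebesgue (R \<inter> E)}"
    using mem_halo_iff[OF assms] by blast
  moreover have "open R" if "R \<in> \<B>" for R
    using assms(1) that unfolding is_open_box_def by auto
  ultimately show ?thesis by auto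
qed

section \<open>Homothets of a box\<close>

lemma image_affinity_box:
  fixes a b c :: "'a::euclidean_space"
  assumes "0 < r"
  shows "(\<lambda>x. c + r *\<^sub>R x) ` box a b = box (c + r *\<^sub>R a) (c + r *\<^sub>R b)"
proof
  show "(\<lambda>x. c + r *\<^sub>R x) ` box a b \<subseteq> box (c + r *\<^sub>R a) (c + r *\<^sub>R b)"
    using assms by (auto simp: mem_box inner_add_left)
  show "box (c + r *\<^sub>R a) (c + r *\<^sub>R b) \<subseteq> (\<lambda>x. c + r *\<^sub>R x) ` box a b"
  proof
    fix y assume "y \<in> box (c + r *\<^sub>R a) (c + r *\<^sub>R b)"
    then have "(1/r) *\<^sub>R (y - c) \<in> box a b"
      using assms by (auto simp: mem_box inner_add_left inner_diff_left field_simps)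
    moreover have "y = c + r *\<^sub>R ((1/r) *\<^sub>R (y - c))" using assms by simp
    ultimately show "y \<in> (\<lambda>x. c + r *\<^sub>R x) ` box a b" by blast
  qed
qed

definition homothet :: "'a::euclidean_space \<Rightarrow> 'a \<Rightarrow> 'a \<Rightarrow> real \<Rightarrow> 'a set" where
  "homothet a b c r = box (c + r *\<^sub>R a) (c + r *\<^sub>R b)"

lemma mem_homothet:
  "x \<in> homothet a b c r \<longleftrightarrow>
     (\<forall>i\<in>Basis. c \<bullet> i + r * (a \<bullet> i) < x \<bullet> i \<and> x \<bullet> i < c \<bullet> i + r * (b \<bullet> i))"
  by (auto simp: homothet_def mem_box inner_add_left)

lemma homothet_unit: "homothet a b 0 1 = box a b"
  by (simp add: homothet_def)

lemma lmeasurable_homothet [simp]: "homothet a b c r \<in> lmeasurable"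
  by (simp add: homothet_def)

lemma homothet_in_basis:
  assumes "homothecy_invariant \<B>" "box a b \<in> \<B>" "0 < r"
  shows "homothet a b c r \<in> \<B>"
proof -
  have "(\<lambda>x. c + x) ` ((\<lambda>x. r *\<^sub>R x) ` box a b) \<in> \<B>"
    using assms unfolding homothecy_invariant_def by blast
  then show ?thesis
    using image_affinity_box[OF \<open>0 < r\<close>, of c a b] by (simp add: image_image homothet_def)
qed

lemma measure_homothet:
  fixes a b c :: "'a::euclidean_space"
  assumes "0 < r"
  shows "measure lebesgue (homothet a b c r) = r ^ DIM('a) * measure lebesgue (box a b)"
proof -
  have "homothet a b c r = (\<lambda>x. r *\<^sub>R x + c) ` box a b"
    using image_affinity_box[OF assms, of c a b] by (simp add: homothet_def add.commute)
  then show ?thesis using measure_lebesgue_affine[of r c "box a b"] assms by simp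
qed

lemma homothet_subset_ball:
  fixes a b c :: "'a::euclidean_space"
  assumes "y \<in> homothet a b c r"
  shows "homothet a b c r \<subseteq> ball y (2 * r * (\<Sum>i\<in>Basis. b \<bullet> i - a \<bullet> i))"
proof
  fix x assume x: "x \<in> homothet a b c r"
  have side: "\<bar>(x - y) \<bullet> i\<bar> \<le> r * (b \<bullet> i - a \<bullet> i)" "0 < r * (b \<bullet> i - a \<bullet> i)" if "i \<in> Basis" for i
    using assms x that unfolding mem_homothet by (force simp: inner_diff_left abs_if algebra_simps)+
  have "dist y x \<le> (\<Sum>i\<in>Basis. \<bar>(x - y) \<bullet> i\<bar>)"
    using norm_le_l1[of "x - y"] by (simp add: dist_norm norm_minus_commute)
  also have "\<dots> \<le> (\<Sum>i\<in>Basis. r * (b \<bullet> i - a \<bullet> i))"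
    by (rule sum_mono) (rule side)
  also have "\<dots> < 2 * (\<Sum>i\<in>Basis. r * (b \<bullet> i - a \<bullet> i))"
    using sum_pos[of Basis "\<lambda>i. r * (b \<bullet> i - a \<bullet> i)"] side(2) by simp
  finally show "x \<in> ball y (2 * r * (\<Sum>i\<in>Basis. b \<bullet> i - a \<bullet> i))"
    by (simp add: sum_distrib_left mult.assoc)
qed

lemma mem_homothet_centred:
  assumes "\<forall>i\<in>Basis. a \<bullet> i < b \<bullet> i" "0 < r"
  shows "y \<in> homothet a b (y - (r / 2) *\<^sub>R (a + b)) r"
  using assms unfolding mem_homothet by (auto simp: inner_diff_left inner_add_left algebra_simps)

section \<open>A density lemma\<close>

lemma measure_Diff_eq_minus_Int:
  assumes "A \<in> lmeasurable" "E \<in> sets lebesgue"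
  shows "measure lebesgue (A - E) = measure lebesgue A - measure lebesgue (E \<inter> A)"
proof -
  have "A - E = A - E \<inter> A" by blast
  then show ?thesis
    using assms measure_Diff[of lebesgue A "E \<inter> A"] by (auto simp: fmeasurable_def)
qed

lemma measure_disjoint_UN_le_measure_outside:
  fixes X :: "'i \<Rightarrow> 'a::euclidean_space set"
  assumes I: "finite I" "pairwise (\<lambda>i j. disjnt (X i) (X j)) I"
    and X: "\<And>i. i \<in> I \<Longrightarrow> X i \<in> lmeasurable \<and> X i \<subseteq> G \<and>
                             \<eta> * measure lebesgue (X i) \<le> measure lebesgue (X i - E)"
    and E: "E \<in> sets lebesgue" and G: "G - E \<in> lmeasurable"
  shows "\<eta> * measure lebesgue (\<Union>i\<in>I. X i) \<le> measure lebesgue (G - E)"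
proof -
  have XE: "X i - E \<in> lmeasurable" if "i \<in> I" for i
    using X[OF that] E by (auto intro: fmeasurable_Diff)
  have "\<eta> * measure lebesgue (\<Union>i\<in>I. X i) = (\<Sum>i\<in>I. \<eta> * measure lebesgue (X i))"
    using measure_UNION'[OF I(1) _ I(2)] X by (simp add: sum_distrib_left)
  also have "\<dots> \<le> (\<Sum>i\<in>I. measure lebesgue (X i - E))"
    by (rule sum_mono) (use X in blast)
  also have "\<dots> = measure lebesgue (\<Union>i\<in>I. X i - E)"
    using I XE by (intro measure_UNION'[symmetric]) (auto simp: pairwise_def disjnt_def)
  also have "\<dots> \<le> measure lebesgue (G - E)"
  proof (rule measure_mono_fmeasurable[OF _ _ G])
    show "(\<Union>i\<in>I. X i - E) \<subseteq> G - E" using X by blast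
    show "(\<Union>i\<in>I. X i - E) \<in> sets lebesgue"
      using I(1) XE by (intro sets.finite_UN) (auto intro: fmeasurableD)
  qed
  finally show ?thesis .
qed

text \<open>A weak Lebesgue density theorem, proved with the Vitali covering theorem.\<close>

lemma negligible_points_of_low_density:
  fixes E N :: "'a::euclidean_space set"
  assumes E: "E \<in> sets lebesgue" and "N \<subseteq> E" and "0 < \<eta>"
    and small_balls: "\<And>y d. y \<in> N \<Longrightarrow> 0 < d \<Longrightarrow> \<exists>\<rho>. 0 < \<rho> \<and> \<rho> < d \<and>
                         \<eta> * measure lebesgue (ball y \<rho>) \<le> measure lebesgue (ball y \<rho> - E)"
  shows "negligible N"
  unfolding negligible_outer_le
proof (intro allI impI)
  fix e :: real assume "0 < e"
  obtain G where G: "open G" "E \<subseteq> G" "G - E \<in> lmeasurable"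
    and "emeasure lebesgue (G - E) < ennreal (e * \<eta>)"
    using sets_lebesgue_outer_open[OF E, of "e * \<eta>"] \<open>0 < e\<close> \<open>0 < \<eta>\<close> by auto
  then have small_GE: "measure lebesgue (G - E) < e * \<eta>"
    using \<open>0 < e\<close> \<open>0 < \<eta>\<close> by (simp add: emeasure_eq_measure2 ennreal_less_iff)
  define K where "K = {(y, \<rho>). 0 < \<rho> \<and> ball y \<rho> \<subseteq> G \<and>
                       \<eta> * measure lebesgue (ball y \<rho>) \<le> measure lebesgue (ball y \<rho> - E)}"
  have fine: "\<exists>i. i \<in> K \<and> y \<in> ball (fst i) (snd i) \<and> snd i < d" if "y \<in> N" "0 < d" for y d
  proof -
    obtain \<rho>0 where "0 < \<rho>0" "ball y \<rho>0 \<subseteq> G"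
      using \<open>y \<in> N\<close> \<open>N \<subseteq> E\<close> G(1,2) open_contains_ball by blast
    moreover obtain \<rho> where "0 < \<rho>" "\<rho> < min d \<rho>0"
      "\<eta> * measure lebesgue (ball y \<rho>) \<le> measure lebesgue (ball y \<rho> - E)"
      using small_balls[OF \<open>y \<in> N\<close>, of "min d \<rho>0"] \<open>0 < d\<close> \<open>0 < \<rho>0\<close> by auto
    ultimately show ?thesis unfolding K_def by (intro exI[of _ "(y, \<rho>)"]) auto
  qed
  obtain C where C: "countable C" "C \<subseteq> K"
    and disj: "pairwise (\<lambda>i j. disjnt (ball (fst i) (snd i)) (ball (fst j) (snd j))) C"
    and null: "negligible (N - (\<Union>i\<in>C. ball (fst i) (snd i)))"
    by (rule Vitali_covering_theorem_balls[of N K fst snd]) (use fine in blast)+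
  define U where "U = (\<Union>i\<in>C. ball (fst i) (snd i))"
  have bound: "measure lebesgue (\<Union>i\<in>I. ball (fst i) (snd i)) \<le> e" if "I \<subseteq> C" "finite I" for I
  proof -
    have "\<eta> * measure lebesgue (\<Union>i\<in>I. ball (fst i) (snd i)) \<le> measure lebesgue (G - E)"
      using that C(2) E G(3) pairwise_subset[OF disj \<open>I \<subseteq> C\<close>]
      by (intro measure_disjoint_UN_le_measure_outside) (force simp: K_def)+
    then have "\<eta> * measure lebesgue (\<Union>i\<in>I. ball (fst i) (snd i)) < \<eta> * e"
      using small_GE by (simp add: mult.commute)
    then show ?thesis using \<open>0 < \<eta>\<close> by simp
  qed
  have U: "U \<in> lmeasurable" "measure lebesgue U \<le> e"
    unfolding U_def using fmeasurable_UN_bound[OF C(1) _ bound] measure_UN_bound[OF C(1) _ bound] by auto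
  have null': "negligible (U - (N \<union> U) \<union> (N \<union> U - U))"
    using null unfolding U_def by (rule negligible_subset) auto
  show "\<exists>T. N \<subseteq> T \<and> T \<in> lmeasurable \<and> measure lebesgue T \<le> e"
  proof (intro exI conjI)
    show "N \<union> U \<in> lmeasurable" by (rule lmeasurable_negligible_symdiff[OF U(1) null'])
    show "measure lebesgue (N \<union> U) \<le> e" using measure_negligible_symdiff[OF U(1) null'] U(2) by simp
  qed auto
qed

definition density_at_most :: "'a::euclidean_space set \<Rightarrow> real \<Rightarrow> 'a set \<Rightarrow> bool" where
  "density_at_most E \<theta> X \<longleftrightarrow> measure lebesgue (E \<inter> X) \<le> \<theta> * measure lebesgue X"

definition sparse_points :: "'a::euclidean_space \<Rightarrow> 'a \<Rightarrow> 'a set \<Rightarrow> real \<Rightarrow> 'a set" where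
  "sparse_points a b E \<theta> = {y \<in> E. \<forall>\<epsilon>>0. \<exists>c r. 0 < r \<and> r < \<epsilon> \<and> y \<in> homothet a b c r \<and>
                                                 density_at_most E \<theta> (homothet a b c r)}"

lemma negligible_sparse_points:
  fixes a b :: "'a::euclidean_space"
  assumes ab: "\<forall>i\<in>Basis. a \<bullet> i < b \<bullet> i" and E: "E \<in> sets lebesgue" and "0 < \<delta>"
  shows "negligible (sparse_points a b E (1 - \<delta>))"
proof -
  (* A homothet of ratio r around y lies in the ball of radius 2 r K about y, whose measure is
     the fixed multiple \<omega> (2 K)^n / |box a b| of its own. *)
  define K where "K = (\<Sum>i\<in>Basis. b \<bullet> i - a \<bullet> i)"
  define \<omega> where "\<omega> = measure lebesgue (ball (0::'a) 1)"
  define \<eta> where "\<eta> = \<delta> * measure lebesgue (box a b) / (\<omega> * (2 * K) ^ DIM('a))"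
  have "0 < K" unfolding K_def using ab by (intro sum_pos) auto
  have "0 < \<omega>" unfolding \<omega>_def using content_ball_pos[of 1 "0::'a"] by simp
  show ?thesis
  proof (rule negligible_points_of_low_density[OF E _ _])
    show "0 < \<eta>"
      unfolding \<eta>_def using \<open>0 < K\<close> \<open>0 < \<omega>\<close> \<open>0 < \<delta>\<close> measure_box_pos[OF ab] by simp
    fix y d assume "y \<in> sparse_points a b E (1 - \<delta>)" "0 < (d::real)"
    then have "0 < d / (2 * K)" using \<open>0 < K\<close> by simp
    then obtain c r where "0 < r" "r < d / (2 * K)" and y: "y \<in> homothet a b c r"
      and sparse: "density_at_most E (1 - \<delta>) (homothet a b c r)"
      using \<open>y \<in> sparse_points a b E (1 - \<delta>)\<close> unfolding sparse_points_def by blast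
    define \<rho> where "\<rho> = 2 * r * K"
    have "homothet a b c r - E \<subseteq> ball y \<rho> - E"
      using homothet_subset_ball[OF y] unfolding \<rho>_def K_def by blast
    moreover have "homothet a b c r - E \<in> lmeasurable" "ball y \<rho> - E \<in> lmeasurable"
      using E by (auto intro: fmeasurable_Diff)
    ultimately have "measure lebesgue (homothet a b c r - E) \<le> measure lebesgue (ball y \<rho> - E)"
      by (intro measure_mono_fmeasurable) (auto intro: fmeasurableD)
    moreover have "measure lebesgue (homothet a b c r - E) =
                   measure lebesgue (homothet a b c r) - measure lebesgue (E \<inter> homothet a b c r)"
      using E by (simp add: measure_Diff_eq_minus_Int)
    moreover have "\<eta> * measure lebesgue (ball y \<rho>) = \<delta> * measure lebesgue (homothet a b c r)"
      using content_ball_conv_unit_ball[of \<rho> y] \<open>0 < r\<close> \<open>0 < K\<close> \<open>0 < \<omega>\<close>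
      unfolding measure_homothet[OF \<open>0 < r\<close>] \<eta>_def \<rho>_def \<omega>_def
      by (simp add: power_mult_distrib field_simps)
    ultimately show "\<exists>\<rho>. 0 < \<rho> \<and> \<rho> < d \<and>
                      \<eta> * measure lebesgue (ball y \<rho>) \<le> measure lebesgue (ball y \<rho> - E)"
      using sparse \<open>0 < r\<close> \<open>0 < K\<close> \<open>r < d / (2 * K)\<close>
      by (intro exI[of _ \<rho>]) (auto simp: density_at_most_def \<rho>_def field_simps)
  qed (auto simp: sparse_points_def)
qed

section \<open>Corner boxes\<close>

definition box_vertex :: "'a::euclidean_space \<Rightarrow> 'a \<Rightarrow> 'a set \<Rightarrow> 'a" where
  "box_vertex a b S = (\<Sum>i\<in>Basis. (if i \<in> S then b \<bullet> i else a \<bullet> i) *\<^sub>R i)"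

text \<open>The image of \<open>homothet a b c r\<close> under the homothety of ratio \<open>t\<close> centred at its vertex
  \<open>c + r *\<^sub>R box_vertex a b S\<close>; for \<open>t = 1/2\<close> these are its \<open>2^n\<close> dyadic children.\<close>

definition corner_box :: "'a::euclidean_space \<Rightarrow> 'a \<Rightarrow> 'a \<Rightarrow> real \<Rightarrow> 'a set \<Rightarrow> real \<Rightarrow> 'a set" where
  "corner_box a b c r S t = homothet a b (c + ((1 - t) * r) *\<^sub>R box_vertex a b S) (t * r)"

lemma mem_corner_box:
  "x \<in> corner_box a b c r S t \<longleftrightarrow> (\<forall>i\<in>Basis.
     (if i \<in> S then c \<bullet> i + r * (b \<bullet> i) - t * r * (b \<bullet> i - a \<bullet> i) < x \<bullet> i \<and> x \<bullet> i < c \<bullet> i + r * (b \<bullet> i)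
      else c \<bullet> i + r * (a \<bullet> i) < x \<bullet> i \<and> x \<bullet> i < c \<bullet> i + r * (a \<bullet> i) + t * r * (b \<bullet> i - a \<bullet> i)))"
  unfolding corner_box_def mem_homothet
  by (intro ball_cong refl) (auto simp: box_vertex_def inner_add_left algebra_simps)

lemma lmeasurable_corner_box [simp]: "corner_box a b c r S t \<in> lmeasurable"
  by (simp add: corner_box_def)

lemma corner_box_one [simp]: "corner_box a b c r S 1 = homothet a b c r"
  by (simp add: corner_box_def)

lemma corner_box_half:
  "corner_box a b c r S (1/2) = homothet a b (c + (r / 2) *\<^sub>R box_vertex a b S) (r / 2)"
  by (simp add: corner_box_def)

lemma measure_corner_box:
  fixes a b c :: "'a::euclidean_space"
  assumes "0 < r" "0 < t"
  shows "measure lebesgue (corner_box a b c r S t) = (t * r) ^ DIM('a) * measure lebesgue (box a b)"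
  unfolding corner_box_def using assms by (intro measure_homothet) simp

lemma corner_box_mono:
  assumes "\<forall>i\<in>Basis. a \<bullet> i < b \<bullet> i" "0 < r" "t \<le> t'"
  shows "corner_box a b c r S t \<subseteq> corner_box a b c r S t'"
proof
  fix x assume x: "x \<in> corner_box a b c r S t"
  have "t * r * (b \<bullet> i - a \<bullet> i) \<le> t' * r * (b \<bullet> i - a \<bullet> i)" if "i \<in> Basis" for i
    using assms that by (intro mult_right_mono) auto
  with x show "x \<in> corner_box a b c r S t'"
    unfolding mem_corner_box by (smt (verit))
qed

lemma corner_box_subset_homothet:
  assumes "\<forall>i\<in>Basis. a \<bullet> i < b \<bullet> i" "0 < r" "t \<le> 1"
  shows "corner_box a b c r S t \<subseteq> homothet a b c r"
  using corner_box_mono[OF assms] by simp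

lemma mem_corner_box_Sup:
  fixes a b c :: "'a::euclidean_space"
  assumes ab: "\<forall>i\<in>Basis. a \<bullet> i < b \<bullet> i" and "0 < r"
    and T: "T \<noteq> {}" "bdd_above T"
    and x: "x \<in> corner_box a b c r S (Sup T)"
  shows "\<exists>t\<in>T. x \<in> corner_box a b c r S t"
proof -
  define \<tau> where "\<tau> i = (if i \<in> S then c \<bullet> i + r * (b \<bullet> i) - x \<bullet> i else x \<bullet> i - c \<bullet> i - r * (a \<bullet> i))
                          / (r * (b \<bullet> i - a \<bullet> i))" for i
  have threshold: "x \<in> corner_box a b c r S t \<longleftrightarrow> (\<forall>i\<in>Basis.
      (if i \<in> S then x \<bullet> i < c \<bullet> i + r * (b \<bullet> i) else c \<bullet> i + r * (a \<bullet> i) < x \<bullet> i) \<and> \<tau> i < t)" for t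
    unfolding mem_corner_box
  proof (intro ball_cong refl)
    fix i :: 'a assume "i \<in> Basis"
    then have "0 < r * (b \<bullet> i - a \<bullet> i)" using ab \<open>0 < r\<close> by simp
    then show "(if i \<in> S then c \<bullet> i + r * (b \<bullet> i) - t * r * (b \<bullet> i - a \<bullet> i) < x \<bullet> i \<and> x \<bullet> i < c \<bullet> i + r * (b \<bullet> i)
        else c \<bullet> i + r * (a \<bullet> i) < x \<bullet> i \<and> x \<bullet> i < c \<bullet> i + r * (a \<bullet> i) + t * r * (b \<bullet> i - a \<bullet> i)) =
      ((if i \<in> S then x \<bullet> i < c \<bullet> i + r * (b \<bullet> i) else c \<bullet> i + r * (a \<bullet> i) < x \<bullet> i) \<and> \<tau> i < t)"
      unfolding \<tau>_def by (auto simp: divide_less_eq algebra_simps)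
  qed
  have fin: "finite (\<tau> ` Basis)" "\<tau> ` Basis \<noteq> {}" by auto
  have "Max (\<tau> ` Basis) < Sup T" using x unfolding threshold by (simp add: Max_less_iff[OF fin])
  then obtain t where "t \<in> T" "Max (\<tau> ` Basis) < t" using less_cSup_iff[OF T] by blast
  with x show ?thesis unfolding threshold by (auto simp: Max_less_iff[OF fin])
qed

lemma half_corner_boxes_disjoint:
  assumes "S \<subseteq> Basis" "S' \<subseteq> Basis" "S \<noteq> S'"
  shows "corner_box a b c r S (1/2) \<inter> corner_box a b c r S' (1/2) = {}"
proof -
  obtain i where "i \<in> Basis" "i \<in> S \<longleftrightarrow> i \<notin> S'" using assms by blast
  then show ?thesis unfolding mem_corner_box disjoint_iff by (fastforce simp: algebra_simps)
qed

lemma homothet_diff_half_corner_boxes: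
  "homothet a b c r - (\<Union>S\<in>Pow Basis. corner_box a b c r S (1/2)) \<subseteq>
     (\<Union>i\<in>Basis. {x. i \<bullet> x = c \<bullet> i + r * (a \<bullet> i + b \<bullet> i) / 2})"
proof
  fix x assume x: "x \<in> homothet a b c r - (\<Union>S\<in>Pow Basis. corner_box a b c r S (1/2))"
  define S where "S = {i\<in>Basis. c \<bullet> i + r * (a \<bullet> i + b \<bullet> i) / 2 < x \<bullet> i}"
  have "S \<in> Pow Basis" by (auto simp: S_def)
  then have "x \<notin> corner_box a b c r S (1/2)" using x by blast
  then obtain i where i: "i \<in> Basis" and
    "\<not> (if i \<in> S then c \<bullet> i + r * (b \<bullet> i) - 1/2 * r * (b \<bullet> i - a \<bullet> i) < x \<bullet> i \<and> x \<bullet> i < c \<bullet> i + r * (b \<bullet> i)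
        else c \<bullet> i + r * (a \<bullet> i) < x \<bullet> i \<and> x \<bullet> i < c \<bullet> i + r * (a \<bullet> i) + 1/2 * r * (b \<bullet> i - a \<bullet> i))"
    unfolding mem_corner_box Ball_def not_all not_imp by (elim exE conjE)
  moreover have "c \<bullet> i + r * (a \<bullet> i) < x \<bullet> i \<and> x \<bullet> i < c \<bullet> i + r * (b \<bullet> i)"
    using x i unfolding Diff_iff mem_homothet by blast
  ultimately have "i \<bullet> x = c \<bullet> i + r * (a \<bullet> i + b \<bullet> i) / 2"
    using i by (cases "i \<in> S") (simp_all add: S_def inner_commute field_simps)
  with i show "x \<in> (\<Union>i\<in>Basis. {x. i \<bullet> x = c \<bullet> i + r * (a \<bullet> i + b \<bullet> i) / 2})" by blast
qed

lemma measure_Int_homothet_eq_sum_half_corner_boxes: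
  fixes a b c :: "'a::euclidean_space"
  assumes ab: "\<forall>i\<in>Basis. a \<bullet> i < b \<bullet> i" and "0 < r" and F: "F \<in> sets lebesgue"
  shows "measure lebesgue (F \<inter> homothet a b c r) =
           (\<Sum>S\<in>Pow Basis. measure lebesgue (F \<inter> corner_box a b c r S (1/2)))"
proof -
  have meas: "F \<inter> corner_box a b c r S t \<in> lmeasurable" for S t
    using fmeasurable_Int_fmeasurable[OF lmeasurable_corner_box F] by (simp add: Int_commute)
  have hyperplanes: "negligible (\<Union>i\<in>Basis. {x. i \<bullet> x = c \<bullet> i + r * (a \<bullet> i + b \<bullet> i) / 2})"
    by (intro negligible_Union) (auto intro!: negligible_hyperplane simp: nonzero_Basis)
  have "corner_box a b c r S (1/2) \<subseteq> homothet a b c r" for S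
    using corner_box_subset_homothet[OF ab \<open>0 < r\<close>] by simp
  then have "F \<inter> homothet a b c r - (\<Union>S\<in>Pow Basis. F \<inter> corner_box a b c r S (1/2)) \<union>
               ((\<Union>S\<in>Pow Basis. F \<inter> corner_box a b c r S (1/2)) - F \<inter> homothet a b c r)
             \<subseteq> homothet a b c r - (\<Union>S\<in>Pow Basis. corner_box a b c r S (1/2))"
    by blast
  then have "negligible (F \<inter> homothet a b c r - (\<Union>S\<in>Pow Basis. F \<inter> corner_box a b c r S (1/2)) \<union>
                ((\<Union>S\<in>Pow Basis. F \<inter> corner_box a b c r S (1/2)) - F \<inter> homothet a b c r))"
    by (rule negligible_subset[OF hyperplanes subset_trans[OF _ homothet_diff_half_corner_boxes]])
  then have "measure lebesgue (F \<inter> homothet a b c r) =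
               measure lebesgue (\<Union>S\<in>Pow Basis. F \<inter> corner_box a b c r S (1/2))"
    using meas[of _ 1] by (intro measure_negligible_symdiff[symmetric]) simp_all
  also have "\<dots> = (\<Sum>S\<in>Pow Basis. measure lebesgue (F \<inter> corner_box a b c r S (1/2)))"
    using half_corner_boxes_disjoint[of _ _ a b c r] meas
    by (intro measure_UNION') (auto simp: pairwise_def disjnt_def)
  finally show ?thesis .
qed

section \<open>Sparse parts of a homothet\<close>

definition sparse_part :: "'a::euclidean_space \<Rightarrow> 'a \<Rightarrow> 'a set \<Rightarrow> real \<Rightarrow> nat \<Rightarrow> 'a \<Rightarrow> real \<Rightarrow> 'a set" where
  "sparse_part a b E \<theta> k c r = \<Union>{homothet a b c' r' | c' r'. 0 < r' \<and> r' \<le> r / 2 ^ k \<and>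
     homothet a b c' r' \<subseteq> homothet a b c r \<and> density_at_most E \<theta> (homothet a b c' r')}"

lemma sparse_part_subset: "sparse_part a b E \<theta> k c r \<subseteq> homothet a b c r"
  unfolding sparse_part_def by blast

lemma lmeasurable_sparse_part: "sparse_part a b E \<theta> k c r \<in> lmeasurable"
proof (rule lmeasurable_open)
  show "bounded (sparse_part a b E \<theta> k c r)"
    by (rule bounded_subset[OF _ sparse_part_subset]) (simp add: homothet_def)
  show "open (sparse_part a b E \<theta> k c r)"
    unfolding sparse_part_def by (auto simp: homothet_def)
qed

lemma sparse_part_0:
  assumes "0 < r" "density_at_most E \<theta> (homothet a b c r)"
  shows "sparse_part a b E \<theta> 0 c r = homothet a b c r"
  using assms sparse_part_subset unfolding sparse_part_def by auto

lemma sparse_part_Suc_subset: "sparse_part a b E \<theta> (Suc k) c r \<subseteq> sparse_part a b E \<theta> k c r"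
proof -
  have "r / 2 ^ Suc k \<le> r / 2 ^ k" if "0 < r' \<and> r' \<le> r / 2 ^ Suc k" for r'
  proof -
    have "0 < r / 2 ^ Suc k" using that by linarith
    then have "0 < r" by (simp add: zero_less_divide_iff)
    then show ?thesis by (intro divide_left_mono) auto
  qed
  then show ?thesis unfolding sparse_part_def by fastforce
qed

lemma sparse_part_half_corner_subset:
  assumes "\<forall>i\<in>Basis. a \<bullet> i < b \<bullet> i" "0 < r"
  shows "sparse_part a b E \<theta> k (c + (r / 2) *\<^sub>R box_vertex a b S) (r / 2) \<subseteq>
           sparse_part a b E \<theta> (Suc k) c r \<inter> corner_box a b c r S (1/2)"
proof -
  have "corner_box a b c r S (1/2) \<subseteq> homothet a b c r"
    using corner_box_subset_homothet[OF assms] by simp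
  then show ?thesis
    unfolding sparse_part_def corner_box_half[symmetric] by (auto simp: field_simps; blast)
qed

lemma sum_measure_sparse_parts_half_corners_le:
  fixes a b c :: "'a::euclidean_space"
  assumes ab: "\<forall>i\<in>Basis. a \<bullet> i < b \<bullet> i" and "0 < r" and E: "E \<in> sets lebesgue"
  shows "(\<Sum>S\<in>Pow Basis. measure lebesgue (E \<inter> sparse_part a b E \<theta> k (c + (r / 2) *\<^sub>R box_vertex a b S) (r / 2)))
           \<le> measure lebesgue (E \<inter> sparse_part a b E \<theta> (Suc k) c r)"
proof -
  define P where "P S = E \<inter> sparse_part a b E \<theta> k (c + (r / 2) *\<^sub>R box_vertex a b S) (r / 2)" for S
  have P: "P S \<subseteq> E \<inter> sparse_part a b E \<theta> (Suc k) c r \<inter> corner_box a b c r S (1/2)" for S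
    using sparse_part_half_corner_subset[OF ab \<open>0 < r\<close>] unfolding P_def by blast
  have meas: "E \<inter> sparse_part a b E \<theta> j c' r' \<in> lmeasurable" for j c' r'
    using fmeasurable_Int_fmeasurable[OF lmeasurable_sparse_part E] by (simp add: Int_commute)
  have "pairwise (\<lambda>S S'. disjnt (P S) (P S')) (Pow Basis)"
    unfolding pairwise_def disjnt_def
  proof (intro ballI impI)
    fix S S' :: "'a set" assume "S \<in> Pow Basis" "S' \<in> Pow Basis" "S \<noteq> S'"
    then show "P S \<inter> P S' = {}"
      using half_corner_boxes_disjoint[of S S' a b c r] P[of S] P[of S'] by blast
  qed
  then have "(\<Sum>S\<in>Pow Basis. measure lebesgue (P S)) = measure lebesgue (\<Union>S\<in>Pow Basis. P S)"
    using meas unfolding P_def by (intro measure_UNION'[symmetric]) auto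
  also have "\<dots> \<le> measure lebesgue (E \<inter> sparse_part a b E \<theta> (Suc k) c r)"
  proof (rule measure_mono_fmeasurable[OF _ _ meas])
    show "(\<Union>S\<in>Pow Basis. P S) \<subseteq> E \<inter> sparse_part a b E \<theta> (Suc k) c r" using P by blast
    show "(\<Union>S\<in>Pow Basis. P S) \<in> sets lebesgue"
      using meas unfolding P_def by (intro sets.finite_UN) (auto intro: fmeasurableD)
  qed
  finally show ?thesis unfolding P_def .
qed

lemma measure_diff_sparse_part_le_sum_half_corners:
  fixes a b c :: "'a::euclidean_space"
  assumes ab: "\<forall>i\<in>Basis. a \<bullet> i < b \<bullet> i" and "0 < r" and E: "E \<in> sets lebesgue"
  shows "measure lebesgue (E \<inter> homothet a b c r) - measure lebesgue (E \<inter> sparse_part a b E \<theta> (Suc k) c r)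
           \<le> (\<Sum>S\<in>Pow Basis.
                measure lebesgue (E \<inter> homothet a b (c + (r / 2) *\<^sub>R box_vertex a b S) (r / 2)) -
                measure lebesgue (E \<inter> sparse_part a b E \<theta> k (c + (r / 2) *\<^sub>R box_vertex a b S) (r / 2)))"
  using sum_measure_sparse_parts_half_corners_le[OF assms, of \<theta> k c]
    measure_Int_homothet_eq_sum_half_corner_boxes[OF assms, of c]
  by (simp add: sum_subtractf corner_box_half)

section \<open>The halo estimate\<close>

lemma isCont_lower_bound_at_right:
  fixes f :: "real \<Rightarrow> real"
  assumes "isCont f t0" "t0 < u" "\<And>t. t0 < t \<Longrightarrow> t \<le> u \<Longrightarrow> A \<le> f t"
  shows "A \<le> f t0"
proof (rule tendsto_lowerbound)
  show "(f \<longlongrightarrow> f t0) (at_right t0)"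
    using assms(1) unfolding isCont_def filterlim_at_split by blast
  show "\<forall>\<^sub>F t in at_right t0. A \<le> f t"
    unfolding eventually_at_right_field using assms(2,3) by (intro exI[of _ u]) auto
qed simp

lemma density_at_most_corner_box_from_right:
  fixes a b c :: "'a::euclidean_space"
  assumes ab: "\<forall>i\<in>Basis. a \<bullet> i < b \<bullet> i" and "0 < r" and E: "E \<in> sets lebesgue"
    and "0 < t0" "t0 < 1"
    and right: "\<And>t. t0 < t \<Longrightarrow> t \<le> 1 \<Longrightarrow> density_at_most E \<theta> (corner_box a b c r S t)"
  shows "density_at_most E \<theta> (corner_box a b c r S t0)"
proof -
  define m where "m t = \<theta> * ((t * r) ^ DIM('a) * measure lebesgue (box a b))" for t
  have meas: "E \<inter> corner_box a b c r S t \<in> lmeasurable" for t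
    using fmeasurable_Int_fmeasurable[OF lmeasurable_corner_box E] by (simp add: Int_commute)
  have "measure lebesgue (E \<inter> corner_box a b c r S t0) \<le> m t0"
  proof (rule isCont_lower_bound_at_right[where f = m and u = 1])
    show "isCont m t0" unfolding m_def by (intro continuous_intros)
    show "t0 < 1" by fact
    fix t assume "t0 < t" "t \<le> 1"
    have "measure lebesgue (E \<inter> corner_box a b c r S t0) \<le> measure lebesgue (E \<inter> corner_box a b c r S t)"
      using corner_box_mono[OF ab \<open>0 < r\<close> less_imp_le[OF \<open>t0 < t\<close>]]
      by (intro measure_mono_fmeasurable fmeasurableD meas) auto
    also have "\<dots> \<le> m t"
      using right[OF \<open>t0 < t\<close> \<open>t \<le> 1\<close>] \<open>0 < r\<close> \<open>0 < t0\<close> \<open>t0 < t\<close>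
      by (simp add: density_at_most_def m_def measure_corner_box)
    finally show "measure lebesgue (E \<inter> corner_box a b c r S t0) \<le> m t" .
  qed
  then show ?thesis
    using \<open>0 < r\<close> \<open>0 < t0\<close> by (simp add: density_at_most_def m_def measure_corner_box)
qed

locale dense_homothets_covered =
  fixes a b :: "'a::euclidean_space" and E H :: "'a set" and \<delta> :: real
  assumes ab: "\<forall>i\<in>Basis. a \<bullet> i < b \<bullet> i"
    and E: "E \<in> sets lebesgue" and H: "H \<in> sets lebesgue" and delta_pos: "0 < \<delta>"
    and dense_homothet_subset:
      "\<And>c r. 0 < r \<Longrightarrow> \<not> density_at_most E (1 - \<delta>) (homothet a b c r) \<Longrightarrow> homothet a b c r \<subseteq> H"
begin

lemma lmeasurable_E_Int: "X \<in> lmeasurable \<Longrightarrow> E \<inter> X \<in> lmeasurable"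
  using fmeasurable_Int_fmeasurable[OF _ E] by (metis Int_commute)

text \<open>Growing a dense half-size corner box towards the full box, the supremum of the dense
  ratios gives a corner box which is still covered by \<open>H\<close> (by openness in the ratio) and is
  sparse (by right-continuity of its measure).\<close>

lemma borderline_corner_box:
  assumes "0 < r" and sparse: "density_at_most E (1 - \<delta>) (homothet a b c r)"
    and dense_half: "\<not> density_at_most E (1 - \<delta>) (corner_box a b c r S (1/2))"
  obtains t where "1/2 \<le> t" "t \<le> 1" "corner_box a b c r S t \<subseteq> H"
    "density_at_most E (1 - \<delta>) (corner_box a b c r S t)"
proof
  define T where "T = {t. 1/2 \<le> t \<and> t \<le> 1 \<and> \<not> density_at_most E (1 - \<delta>) (corner_box a b c r S t)}"
  have "1/2 \<in> T" "bdd_above T" using dense_half unfolding T_def by (auto intro: bdd_aboveI[of _ 1])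
  then have T: "T \<noteq> {}" "bdd_above T" by auto
  show "1/2 \<le> Sup T" using \<open>1/2 \<in> T\<close> \<open>bdd_above T\<close> by (rule cSup_upper)
  show "Sup T \<le> 1" using T(1) by (rule cSup_least) (simp add: T_def)
  show "corner_box a b c r S (Sup T) \<subseteq> H"
  proof
    fix x assume "x \<in> corner_box a b c r S (Sup T)"
    then obtain t where t: "t \<in> T" "x \<in> corner_box a b c r S t"
      using mem_corner_box_Sup[OF ab \<open>0 < r\<close> T] by blast
    then have "corner_box a b c r S t \<subseteq> H"
      using \<open>0 < r\<close> dense_homothet_subset unfolding T_def corner_box_def by auto
    with t show "x \<in> H" by blast
  qed
  show "density_at_most E (1 - \<delta>) (corner_box a b c r S (Sup T))"
  proof (cases "Sup T = 1")
    case True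
    then show ?thesis using sparse by simp
  next
    case False
    show ?thesis
    proof (rule density_at_most_corner_box_from_right[OF ab \<open>0 < r\<close> E])
      show "0 < Sup T" "Sup T < 1" using False \<open>1/2 \<le> Sup T\<close> \<open>Sup T \<le> 1\<close> by auto
      fix t assume "Sup T < t" "t \<le> 1"
      then have "t \<notin> T" using cSup_upper[OF _ \<open>bdd_above T\<close>, of t] by auto
      with \<open>Sup T < t\<close> \<open>t \<le> 1\<close> \<open>1/2 \<le> Sup T\<close>
      show "density_at_most E (1 - \<delta>) (corner_box a b c r S t)" unfolding T_def by simp
    qed
  qed
qed

lemma measure_H_diff_E_ge_if_dense_half_corner:
  assumes "0 < r" "density_at_most E (1 - \<delta>) (homothet a b c r)"
    "\<not> density_at_most E (1 - \<delta>) (corner_box a b c r S (1/2))"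
  shows "\<delta> / 2 ^ DIM('a) * measure lebesgue (homothet a b c r)
           \<le> measure lebesgue ((H - E) \<inter> homothet a b c r)"
proof -
  obtain t where t: "1/2 \<le> t" "t \<le> 1" "corner_box a b c r S t \<subseteq> H"
    and sparse: "density_at_most E (1 - \<delta>) (corner_box a b c r S t)"
    using borderline_corner_box[OF assms] .
  define m0 where "m0 = measure lebesgue (box a b)"
  have "0 < m0" unfolding m0_def using measure_box_pos[OF ab] .
  have "(r / 2) ^ DIM('a) \<le> (t * r) ^ DIM('a)"
    using t(1) \<open>0 < r\<close> by (intro power_mono) auto
  then have "\<delta> * ((r / 2) ^ DIM('a) * m0) \<le> \<delta> * ((t * r) ^ DIM('a) * m0)"
    using delta_pos \<open>0 < m0\<close> by (intro mult_left_mono mult_right_mono) auto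
  then have "\<delta> / 2 ^ DIM('a) * measure lebesgue (homothet a b c r) \<le> \<delta> * ((t * r) ^ DIM('a) * m0)"
    by (simp add: measure_homothet[OF \<open>0 < r\<close>] m0_def power_divide)
  also have "\<dots> \<le> measure lebesgue (corner_box a b c r S t) - measure lebesgue (E \<inter> corner_box a b c r S t)"
    using sparse t(1) \<open>0 < r\<close> by (simp add: density_at_most_def measure_corner_box m0_def algebra_simps)
  also have "\<dots> = measure lebesgue (corner_box a b c r S t - E)"
    using E by (simp add: measure_Diff_eq_minus_Int)
  also have "\<dots> \<le> measure lebesgue ((H - E) \<inter> homothet a b c r)"
  proof (rule measure_mono_fmeasurable)
    show "corner_box a b c r S t - E \<subseteq> (H - E) \<inter> homothet a b c r"
      using t(3) corner_box_subset_homothet[OF ab \<open>0 < r\<close> t(2)] by blast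
    show "corner_box a b c r S t - E \<in> sets lebesgue"
      by (intro sets.Diff[OF _ E] fmeasurableD) simp
    show "(H - E) \<inter> homothet a b c r \<in> lmeasurable"
      using fmeasurable_Int_fmeasurable[OF lmeasurable_homothet sets.Diff[OF H E]] by (simp add: Int_commute)
  qed
  finally show ?thesis .
qed

lemma measure_H_diff_E_ge_sparse_part:
  assumes "0 < r" "density_at_most E (1 - \<delta>) (homothet a b c r)"
  shows "\<delta> / 2 ^ DIM('a) * (measure lebesgue (E \<inter> homothet a b c r) -
                             measure lebesgue (E \<inter> sparse_part a b E (1 - \<delta>) k c r))
           \<le> measure lebesgue ((H - E) \<inter> homothet a b c r)"
  using assms
proof (induction k arbitrary: c r)
  case 0
  then show ?case by (simp add: sparse_part_0)
next
  case (Suc k)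
  define child where "child S = c + (r / 2) *\<^sub>R box_vertex a b S" for S
  define D where "D j c' r' = measure lebesgue (E \<inter> homothet a b c' r') -
                              measure lebesgue (E \<inter> sparse_part a b E (1 - \<delta>) j c' r')" for j c' r'
  have "0 \<le> \<delta> / 2 ^ DIM('a)" using delta_pos by simp
  consider S where "\<not> density_at_most E (1 - \<delta>) (corner_box a b c r S (1/2))"
    | "\<And>S. density_at_most E (1 - \<delta>) (homothet a b (child S) (r / 2))"
    unfolding child_def corner_box_half by blast
  then show ?case
  proof cases
    case 1
    have "measure lebesgue (E \<inter> homothet a b c r) \<le> measure lebesgue (homothet a b c r)"
      using E by (intro measure_mono_fmeasurable lmeasurable_E_Int fmeasurableD) auto
    then have "D (Suc k) c r \<le> measure lebesgue (homothet a b c r)"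
      unfolding D_def using measure_nonneg[of lebesgue "E \<inter> sparse_part a b E (1 - \<delta>) (Suc k) c r"]
      by linarith
    then have "\<delta> / 2 ^ DIM('a) * D (Suc k) c r \<le> \<delta> / 2 ^ DIM('a) * measure lebesgue (homothet a b c r)"
      using \<open>0 \<le> \<delta> / 2 ^ DIM('a)\<close> by (rule mult_left_mono)
    also have "\<dots> \<le> measure lebesgue ((H - E) \<inter> homothet a b c r)"
      using Suc.prems 1 by (rule measure_H_diff_E_ge_if_dense_half_corner)
    finally show ?thesis unfolding D_def .
  next
    case 2
    have "\<delta> / 2 ^ DIM('a) * D (Suc k) c r \<le> \<delta> / 2 ^ DIM('a) * (\<Sum>S\<in>Pow Basis. D k (child S) (r / 2))"
      using measure_diff_sparse_part_le_sum_half_corners[OF ab \<open>0 < r\<close> E]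
      by (intro mult_left_mono \<open>0 \<le> \<delta> / 2 ^ DIM('a)\<close>) (simp add: D_def child_def)
    also have "\<dots> = (\<Sum>S\<in>Pow Basis. \<delta> / 2 ^ DIM('a) * D k (child S) (r / 2))"
      by (simp add: sum_distrib_left)
    also have "\<dots> \<le> (\<Sum>S\<in>Pow Basis. measure lebesgue ((H - E) \<inter> homothet a b (child S) (r / 2)))"
      using Suc.IH 2 \<open>0 < r\<close> by (intro sum_mono) (simp add: D_def)
    also have "\<dots> = measure lebesgue ((H - E) \<inter> homothet a b c r)"
      using measure_Int_homothet_eq_sum_half_corner_boxes[OF ab \<open>0 < r\<close> sets.Diff[OF H E], of c]
      by (simp add: child_def corner_box_half)
    finally show ?thesis unfolding D_def .
  qed
qed

lemma E_diff_H_subset_sparse_points: "E - H \<subseteq> sparse_points a b E (1 - \<delta>)"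
  unfolding sparse_points_def
proof (intro subsetI CollectI conjI allI impI)
  fix y assume y: "y \<in> E - H"
  then show "y \<in> E" by blast
  fix \<epsilon> :: real assume "0 < \<epsilon>"
  then have "0 < \<epsilon> / 2" "\<epsilon> / 2 < \<epsilon>" by auto
  moreover have centred: "y \<in> homothet a b (y - (\<epsilon> / 4) *\<^sub>R (a + b)) (\<epsilon> / 2)"
    using mem_homothet_centred[OF ab \<open>0 < \<epsilon> / 2\<close>, of y] by simp
  moreover have "density_at_most E (1 - \<delta>) (homothet a b (y - (\<epsilon> / 4) *\<^sub>R (a + b)) (\<epsilon> / 2))"
    using dense_homothet_subset[OF \<open>0 < \<epsilon> / 2\<close>] centred y by blast
  ultimately show "\<exists>c r. 0 < r \<and> r < \<epsilon> \<and> y \<in> homothet a b c r \<and>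
                         density_at_most E (1 - \<delta>) (homothet a b c r)"
    by blast
qed

lemma measure_sparse_part_tendsto_0:
  "(\<lambda>k. measure lebesgue (E \<inter> sparse_part a b E (1 - \<delta>) k 0 1)) \<longlonglongrightarrow> 0"
proof -
  define A where "A k = E \<inter> sparse_part a b E (1 - \<delta>) k 0 1" for k
  have A: "A k \<in> lmeasurable" for k
    unfolding A_def by (intro lmeasurable_E_Int lmeasurable_sparse_part)
  have "(\<Inter>k. A k) \<subseteq> sparse_points a b E (1 - \<delta>)"
    unfolding sparse_points_def
  proof (intro subsetI CollectI conjI allI impI)
    fix y assume y: "y \<in> (\<Inter>k. A k)"
    then show "y \<in> E" by (auto simp: A_def)
    fix \<epsilon> :: real assume "0 < \<epsilon>"
    then obtain k where "(1 / 2) ^ k < \<epsilon>" using real_arch_pow_inv[of \<epsilon> "1/2"] by auto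
    moreover have "y \<in> sparse_part a b E (1 - \<delta>) k 0 1" using y by (auto simp: A_def)
    ultimately show "\<exists>c r. 0 < r \<and> r < \<epsilon> \<and> y \<in> homothet a b c r \<and>
                           density_at_most E (1 - \<delta>) (homothet a b c r)"
      unfolding sparse_part_def by (force simp: power_divide)
  qed
  then have "measure lebesgue (\<Inter>k. A k) = 0"
    by (intro negligible_imp_measure0 negligible_subset[OF negligible_sparse_points[OF ab E delta_pos]])
  moreover have "(\<lambda>k. measure lebesgue (A k)) \<longlonglongrightarrow> measure lebesgue (\<Inter>k. A k)"
  proof (rule Lim_measure_decseq)
    show "range A \<subseteq> sets lebesgue" using A by (auto intro: fmeasurableD)
    show "decseq A"
      unfolding A_def by (intro decseq_SucI Int_mono order_refl sparse_part_Suc_subset)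
    show "emeasure lebesgue (A k) \<noteq> \<infinity>" for k using fmeasurableD2[OF A] by simp
  qed
  ultimately show ?thesis unfolding A_def by simp
qed

lemma measure_Int_H_ge:
  assumes "density_at_most E (1 - \<delta>) (box a b)"
  shows "(1 + \<delta> / 2 ^ DIM('a)) * measure lebesgue (E \<inter> box a b) \<le> measure lebesgue (H \<inter> box a b)"
proof -
  define \<gamma> where "\<gamma> = \<delta> / 2 ^ DIM('a)"
  have "\<gamma> * (measure lebesgue (E \<inter> box a b) - measure lebesgue (E \<inter> sparse_part a b E (1 - \<delta>) k 0 1))
          \<le> measure lebesgue ((H - E) \<inter> box a b)" for k
    using measure_H_diff_E_ge_sparse_part[of 1 0 k] assms by (simp add: homothet_unit \<gamma>_def)
  moreover have "(\<lambda>k. \<gamma> * (measure lebesgue (E \<inter> box a b) -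
                   measure lebesgue (E \<inter> sparse_part a b E (1 - \<delta>) k 0 1)))
                 \<longlonglongrightarrow> \<gamma> * (measure lebesgue (E \<inter> box a b) - 0)"
    by (intro tendsto_intros measure_sparse_part_tendsto_0)
  ultimately have gain: "\<gamma> * measure lebesgue (E \<inter> box a b) \<le> measure lebesgue ((H - E) \<inter> box a b)"
    using LIMSEQ_le_const2 by fastforce
  have "measure lebesgue (E \<inter> box a b) = measure lebesgue (E \<inter> H \<inter> box a b)"
    using negligible_subset[OF negligible_sparse_points[OF ab E delta_pos] E_diff_H_subset_sparse_points]
    by (intro measure_negligible_symdiff[symmetric] lmeasurable_E_Int) (auto elim: negligible_subset)
  moreover have "measure lebesgue (H \<inter> box a b) =
                 measure lebesgue (E \<inter> H \<inter> box a b) + measure lebesgue ((H - E) \<inter> box a b)"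
  proof -
    have "box a b \<inter> (E \<inter> H) \<in> lmeasurable" "box a b \<inter> (H - E) \<in> lmeasurable"
      using E H by (auto intro: fmeasurable_Int_fmeasurable)
    then have "E \<inter> H \<inter> box a b \<in> lmeasurable" "(H - E) \<inter> box a b \<in> lmeasurable"
      by (simp_all only: Int_commute)
    then have "measure lebesgue ((E \<inter> H \<inter> box a b) \<union> ((H - E) \<inter> box a b)) =
               measure lebesgue (E \<inter> H \<inter> box a b) + measure lebesgue ((H - E) \<inter> box a b)"
      by (intro measure_Union) (auto simp: fmeasurable_def)
    moreover have "H \<inter> box a b = (E \<inter> H \<inter> box a b) \<union> ((H - E) \<inter> box a b)" by blast
    ultimately show ?thesis by simp
  qed
  ultimately show ?thesis using gain by (simp add: \<gamma>_def algebra_simps)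
qed

lemma measure_Int_H_gt:
  assumes "0 < \<alpha>" "\<alpha> < 1 - \<delta>" "1 - \<delta> < \<xi>" "\<xi> < 1"
    and dense: "\<alpha> * measure lebesgue (box a b) < measure lebesgue (box a b \<inter> E)"
  shows "\<alpha> * (1 + (1 - \<xi>) / 2 ^ DIM('a)) * measure lebesgue (box a b) < measure lebesgue (box a b \<inter> H)"
proof (cases "density_at_most E (1 - \<delta>) (box a b)")
  case True
  have "(1 - \<xi>) / 2 ^ DIM('a) \<le> \<delta> / 2 ^ DIM('a)"
    using assms by (intro divide_right_mono) auto
  then have "(1 + (1 - \<xi>) / 2 ^ DIM('a)) * (\<alpha> * measure lebesgue (box a b))
             \<le> (1 + \<delta> / 2 ^ DIM('a)) * (\<alpha> * measure lebesgue (box a b))"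
    using \<open>0 < \<alpha>\<close> measure_box_pos[OF ab] by (intro mult_right_mono) auto
  also have "\<dots> < (1 + \<delta> / 2 ^ DIM('a)) * measure lebesgue (E \<inter> box a b)"
    using dense delta_pos by (intro mult_strict_left_mono) (auto simp: Int_commute add_pos_nonneg)
  also have "\<dots> \<le> measure lebesgue (H \<inter> box a b)"
    using True by (rule measure_Int_H_ge)
  finally show ?thesis by (simp add: Int_commute mult_ac)
next
  case False
  then have "box a b \<subseteq> H" using dense_homothet_subset[of 1 0] by (simp add: homothet_unit)
  have "(1 - \<xi>) / 2 ^ DIM('a) \<le> 1 - \<xi>" using \<open>\<xi> < 1\<close> by (simp add: divide_le_eq)
  then have "\<alpha> * (1 + (1 - \<xi>) / 2 ^ DIM('a)) \<le> \<alpha> * (2 - \<xi>)"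
    using \<open>0 < \<alpha>\<close> by (intro mult_left_mono) auto
  also have "\<dots> < \<xi> * (2 - \<xi>)" using assms by (intro mult_strict_right_mono) auto
  also have "\<dots> = 1 - (1 - \<xi>)\<^sup>2" by (simp add: power2_eq_square algebra_simps)
  also have "\<dots> \<le> 1" by simp
  finally show ?thesis
    using \<open>box a b \<subseteq> H\<close> measure_box_pos[OF ab] by (simp add: Int_absorb2)
qed

end

theorem theorem2:
  fixes \<B> :: "'a::euclidean_space set set" and E :: "'a set"
    and \<alpha> \<xi> \<delta> :: real
  assumes "\<forall>R\<in>\<B>. is_open_box R"
    and "homothecy_invariant \<B>"
    and "E \<in> sets lebesgue" and "emeasure lebesgue E < \<infinity>"
    and "0 < \<alpha>" and "\<alpha> < 1"
    and "0 < \<xi>" and "\<xi> < 1" and "0 < \<delta>" and "\<delta> < 1"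
    and "\<alpha> < 1 - \<delta>" and "1 - \<delta> < \<xi>"
  shows "halo \<B> \<alpha> E \<subseteq>
           halo \<B> (\<alpha> * (1 + (1 - \<xi>) / 2 ^ DIM('a))) (halo \<B> (1 - \<delta>) E)"
proof
  note B = assms(1) and E = assms(3)
  have "0 < 1 - \<delta>" using assms by simp
  define H where "H = halo \<B> (1 - \<delta>) E"
  have H: "H \<in> sets lebesgue" unfolding H_def using open_halo[OF B E] assms by simp
  fix x assume "x \<in> halo \<B> \<alpha> E"
  then obtain R where R: "R \<in> \<B>" "x \<in> R" "\<alpha> * measure lebesgue R < measure lebesgue (R \<inter> E)"
    using mem_halo_iff[OF B E] assms by auto
  then obtain a b where ab: "\<forall>i\<in>Basis. a \<bullet> i < b \<bullet> i" and "R = box a b"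
    using B unfolding is_open_box_def by blast
  interpret dense_homothets_covered a b E H \<delta>
  proof
    fix c r assume "0 < r" "\<not> density_at_most E (1 - \<delta>) (homothet a b c r)"
    moreover have "homothet a b c r \<in> \<B>"
      using homothet_in_basis[OF assms(2)] R(1) \<open>R = box a b\<close> \<open>0 < r\<close> by simp
    ultimately show "homothet a b c r \<subseteq> H"
      unfolding H_def density_at_most_def subset_iff mem_halo_iff[OF B E less_imp_le[OF \<open>0 < 1 - \<delta>\<close>]]
      by (auto simp: Int_commute)
  qed (use ab E H assms in auto)
  have "\<alpha> * (1 + (1 - \<xi>) / 2 ^ DIM('a)) * measure lebesgue R < measure lebesgue (R \<inter> H)"
    using measure_Int_H_gt R(3) assms \<open>R = box a b\<close> by simp
  then show "x \<in> halo \<B> (\<alpha> * (1 + (1 - \<xi>) / 2 ^ DIM('a))) (halo \<B> (1 - \<delta>) E)"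
    using mem_halo_iff[OF B H] R(1,2) assms unfolding H_def by auto
qed

end
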